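(* Let $A$ (in $\mathcal H$) and $B$ (in $\mathcal K$) be closed densely defined operators with $A\dashv B$ via a (possibly unbounded) intertwining operator $T$. Then: (i) $\sigma_p(A)\subseteq\sigma_p(B)$; if $\xi\in D(A)$ is an eigenvector of $A$ for eigenvalue $\lambda$, then $T\xi$ is an eigenvector of $B$ for $\lambda$; hence for every $\lambda\in\sigma_p(A)$ the multiplicities satisfy $m_A(\lambda)\le m_B(\lambda)$; (ii) if $TD(A)=D(B)$ and $T^{-1}$ is bounded, then $\sigma_p(A)=\sigma_p(B)$; (iii) if $T^{-1}$ is bounded and $TD(A)$ is a core for $B$, then $\sigma_p(B)\subseteq\sigma(A)$.
   Context: A closed densely defined operator $T:D(T)\subseteq\mathcal H\to\mathcal K$ is an intertwining operator for $A$ and $B$ if $D(A)\subseteq D(T)$ and $AD(A)\subseteq D(T)$, $TD(A)\subseteq D(B)$, and $BT\xi=TA\xi$ for all $\xi\in D(A)$. $A\dashv B$ means there is such an intertwining operator $T$, injective with densely defined inverse $T^{-1}$ (defined on $R(T)$). $\sigma_p$ denotes the set of eigenvalues, $m_A(\lambda)$ the dimension of $\ker(A-\lambda I)$, and $\sigma(A)$ the spectrum (complement of the set of $\lambda$ for which $A-\lambda I$ has a bounded everywhere defined inverse). *)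

theory Defs
  imports "HOL-Analysis.Analysis"
begin

class complex_vector = real_vector +
  fixes scaleC :: "complex \<Rightarrow> 'a \<Rightarrow> 'a" (infixr \<open>*\<^sub>C\<close> 75)
  assumes scaleC_add_right: "scaleC a (x + y) = scaleC a x + scaleC a y"
    and scaleC_add_left: "scaleC (a + b) x = scaleC a x + scaleC b x"
    and scaleC_scaleC: "scaleC a (scaleC b x) = scaleC (a * b) x"
    and scaleC_one: "scaleC 1 x = x"
    and scaleR_scaleC: "scaleR r x = scaleC (complex_of_real r) x"

class complex_normed_vector = complex_vector + real_normed_vector +
  assumes norm_scaleC: "norm (scaleC a x) = cmod a * norm x"

class complex_inner = complex_normed_vector +
  fixes cinner :: "'a \<Rightarrow> 'a \<Rightarrow> complex"
  assumes cinner_commute: "cinner x y = cnj (cinner y x)"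
    and cinner_add_left: "cinner (x + y) z = cinner x z + cinner y z"
    and cinner_scaleC_left: "cinner (scaleC r x) y = cnj r * cinner x y"
    and cinner_self_real: "Im (cinner x x) = 0"
    and cinner_self_nonneg: "0 \<le> Re (cinner x x)"
    and cinner_self_eq_0: "cinner x x = 0 \<longleftrightarrow> x = 0"
    and norm_eq_sqrt_cinner: "norm x = sqrt (Re (cinner x x))"

class chilbert_space = complex_inner + complete_space

section \<open>Unbounded operators, given by a domain D and a map f (values outside D irrelevant)\<close>

definition csubspace :: "'a::complex_vector set \<Rightarrow> bool" where
  "csubspace S \<longleftrightarrow> 0 \<in> S \<and> (\<forall>x\<in>S. \<forall>y\<in>S. x + y \<in> S) \<and> (\<forall>c. \<forall>x\<in>S. c *\<^sub>C x \<in> S)"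

definition linear_op :: "'a::complex_vector set \<Rightarrow> ('a \<Rightarrow> 'b::complex_vector) \<Rightarrow> bool" where
  "linear_op D f \<longleftrightarrow> csubspace D \<and>
     (\<forall>x\<in>D. \<forall>y\<in>D. f (x + y) = f x + f y) \<and> (\<forall>c. \<forall>x\<in>D. f (c *\<^sub>C x) = c *\<^sub>C f x)"

definition graph_op :: "'a set \<Rightarrow> ('a \<Rightarrow> 'b) \<Rightarrow> ('a \<times> 'b) set" where
  "graph_op D f = {(x, f x) | x. x \<in> D}"

definition closed_op :: "'a::complex_normed_vector set \<Rightarrow> ('a \<Rightarrow> 'b::complex_normed_vector) \<Rightarrow> bool" where
  "closed_op D f \<longleftrightarrow> linear_op D f \<and> closed (graph_op D f)"

definition densely_defined :: "'a::complex_normed_vector set \<Rightarrow> bool" where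
  "densely_defined D \<longleftrightarrow> closure D = UNIV"

definition intertwining ::
  "'a::complex_normed_vector set \<Rightarrow> ('a \<Rightarrow> 'a) \<Rightarrow> 'b::complex_normed_vector set \<Rightarrow> ('b \<Rightarrow> 'b)
   \<Rightarrow> 'a set \<Rightarrow> ('a \<Rightarrow> 'b) \<Rightarrow> bool" where
  "intertwining DA A DB B DT T \<longleftrightarrow>
     closed_op DT T \<and> densely_defined DT \<and>
     DA \<subseteq> DT \<and> A ` DA \<subseteq> DT \<and> T ` DA \<subseteq> DB \<and>
     (\<forall>\<xi>\<in>DA. B (T \<xi>) = T (A \<xi>))"

text \<open>A \<turnstile> B via T: T intertwining, injective, with densely defined inverse (domain R(T)).\<close>
definition quasi_affine_via ::
  "'a::complex_normed_vector set \<Rightarrow> ('a \<Rightarrow> 'a) \<Rightarrow> 'b::complex_normed_vector set \<Rightarrow> ('b \<Rightarrow> 'b)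
   \<Rightarrow> 'a set \<Rightarrow> ('a \<Rightarrow> 'b) \<Rightarrow> bool" where
  "quasi_affine_via DA A DB B DT T \<longleftrightarrow>
     intertwining DA A DB B DT T \<and> inj_on T DT \<and> densely_defined (T ` DT)"

definition bounded_inverse :: "'a::complex_normed_vector set \<Rightarrow> ('a \<Rightarrow> 'b::complex_normed_vector) \<Rightarrow> bool" where
  "bounded_inverse D T \<longleftrightarrow> inj_on T D \<and> (\<exists>C. \<forall>x\<in>D. norm x \<le> C * norm (T x))"

definition is_eigenvector :: "'a::complex_vector set \<Rightarrow> ('a \<Rightarrow> 'a) \<Rightarrow> complex \<Rightarrow> 'a \<Rightarrow> bool" where
  "is_eigenvector D A \<mu> \<xi> \<longleftrightarrow> \<xi> \<in> D \<and> \<xi> \<noteq> 0 \<and> A \<xi> = \<mu> *\<^sub>C \<xi>"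

definition point_spectrum :: "'a::complex_vector set \<Rightarrow> ('a \<Rightarrow> 'a) \<Rightarrow> complex set" where
  "point_spectrum D A = {\<mu>. \<exists>\<xi>. is_eigenvector D A \<mu> \<xi>}"

definition cindependent :: "'a::complex_vector set \<Rightarrow> bool" where
  "cindependent S \<longleftrightarrow> (\<forall>F u. finite F \<and> F \<subseteq> S \<and> (\<Sum>x\<in>F. u x *\<^sub>C x) = 0 \<longrightarrow> (\<forall>x\<in>F. u x = 0))"

definition cdim :: "'a::complex_vector set \<Rightarrow> enat" where
  "cdim S = (SUP F \<in> {F. finite F \<and> F \<subseteq> S \<and> cindependent F}. enat (card F))"

definition eigenspace :: "'a::complex_vector set \<Rightarrow> ('a \<Rightarrow> 'a) \<Rightarrow> complex \<Rightarrow> 'a set" where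
  "eigenspace D A \<mu> = {\<xi> \<in> D. A \<xi> - \<mu> *\<^sub>C \<xi> = 0}"

definition multiplicity_op :: "'a::complex_vector set \<Rightarrow> ('a \<Rightarrow> 'a) \<Rightarrow> complex \<Rightarrow> enat" where
  "multiplicity_op D A \<mu> = cdim (eigenspace D A \<mu>)"

definition bounded_clinear_map :: "('a::complex_normed_vector \<Rightarrow> 'b::complex_normed_vector) \<Rightarrow> bool" where
  "bounded_clinear_map R \<longleftrightarrow> (\<forall>x y. R (x + y) = R x + R y) \<and> (\<forall>c x. R (c *\<^sub>C x) = c *\<^sub>C R x)
     \<and> (\<exists>K. \<forall>x. norm (R x) \<le> K * norm x)"

definition resolvent_set :: "'a::complex_normed_vector set \<Rightarrow> ('a \<Rightarrow> 'a) \<Rightarrow> complex set" where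
  "resolvent_set D A = {\<mu>. \<exists>R. bounded_clinear_map R \<and> range R \<subseteq> D \<and>
      (\<forall>y. A (R y) - \<mu> *\<^sub>C R y = y) \<and> (\<forall>x\<in>D. R (A x - \<mu> *\<^sub>C x) = x)}"

definition spectrum_op :: "'a::complex_normed_vector set \<Rightarrow> ('a \<Rightarrow> 'a) \<Rightarrow> complex set" where
  "spectrum_op D A = - resolvent_set D A"

definition is_core :: "'a::complex_normed_vector set \<Rightarrow> ('a \<Rightarrow> 'a) \<Rightarrow> 'a set \<Rightarrow> bool" where
  "is_core D B C \<longleftrightarrow> C \<subseteq> D \<and> closure (graph_op C B) = graph_op D B"

end

theory Submission
  imports Defs
begin

text \<open>The intertwining relation turns the eigen-equation of \<open>A\<close> into that of \<open>B\<close>: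
  \<open>B (T \<xi>) - \<mu> T \<xi> = T (A \<xi> - \<mu> \<xi>)\<close>. Injectivity of \<open>T\<close> then transports eigenvectors,
  and injective linear maps preserve linear independence, which gives (i); if \<open>T\<close> maps
  \<open>D(A)\<close> onto \<open>D(B)\<close> the same identity can be read backwards, giving (ii). For (iii), an
  eigenvector \<open>\<eta>\<close> of \<open>B\<close> is approximated in graph norm by \<open>T \<xi>\<^sub>n\<close> with \<open>\<xi>\<^sub>n \<in> D(A)\<close>;
  then \<open>T ((A - \<mu>) \<xi>\<^sub>n) \<longrightarrow> 0\<close>, so \<open>(A - \<mu>) \<xi>\<^sub>n \<longrightarrow> 0\<close> as \<open>T\<inverse>\<close> is bounded, and if \<open>\<mu>\<close>
  were in the resolvent set also \<open>\<xi>\<^sub>n \<longrightarrow> 0\<close>. Closedness of \<open>T\<close> would force \<open>\<eta> = T 0 = 0\<close>.\<close>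

lemma scaleC_zero_left [simp]: "(0::complex) *\<^sub>C (x::'a::complex_vector) = 0"
  by (metis scaleR_scaleC scale_zero_left of_real_0)

lemma scaleC_zero_right [simp]: "(c::complex) *\<^sub>C (0::'a::complex_vector) = 0"
  by (metis add_cancel_right_right scaleC_add_right)

lemma scaleC_minus1_left: "(-1::complex) *\<^sub>C (x::'a::complex_vector) = - x"
  by (metis scaleR_scaleC scaleR_minus1_left of_real_minus of_real_1)

lemma bounded_linear_scaleC: "bounded_linear (\<lambda>x::'a::complex_normed_vector. c *\<^sub>C x)"
proof (rule bounded_linear_intro[where K = "cmod c"])
  show "c *\<^sub>C (r *\<^sub>R x) = r *\<^sub>R (c *\<^sub>C x)" for r and x :: 'a
    by (simp add: scaleR_scaleC scaleC_scaleC mult.commute)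
qed (simp_all add: scaleC_add_right norm_scaleC mult.commute)

lemma bounded_clinear_map_imp_bounded_linear:
  assumes "bounded_clinear_map R"
  shows "bounded_linear R"
proof -
  obtain K where "\<And>x. norm (R x) \<le> K * norm x"
    using assms unfolding bounded_clinear_map_def by blast
  then show ?thesis
    using assms unfolding bounded_clinear_map_def
    by (intro bounded_linear_intro[where K = K]) (auto simp: scaleR_scaleC mult.commute)
qed

lemma linear_op_zero:
  assumes "linear_op D f"
  shows "0 \<in> D" "f 0 = 0"
proof -
  show "0 \<in> D" using assms unfolding linear_op_def csubspace_def by blast
  then have "f (0 *\<^sub>C 0) = 0 *\<^sub>C f 0" using assms unfolding linear_op_def by blast
  then show "f 0 = 0" by simp
qed

lemma linear_op_scaleC:
  assumes "linear_op D f" "x \<in> D"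
  shows "c *\<^sub>C x \<in> D" "f (c *\<^sub>C x) = c *\<^sub>C f x"
  using assms unfolding linear_op_def csubspace_def by auto

lemma linear_op_diff:
  assumes "linear_op D f" "x \<in> D" "y \<in> D"
  shows "x - y \<in> D" "f (x - y) = f x - f y"
proof -
  have "-y \<in> D" "f (-y) = - f y"
    using linear_op_scaleC[OF assms(1,3), of "-1"] by (simp_all add: scaleC_minus1_left)
  then show "x - y \<in> D" "f (x - y) = f x - f y"
    using assms unfolding linear_op_def csubspace_def by (metis diff_conv_add_uminus)+
qed

lemma linear_op_sum:
  assumes "linear_op D f" "finite F" "F \<subseteq> D"
  shows "(\<Sum>x\<in>F. u x *\<^sub>C x) \<in> D \<and> f (\<Sum>x\<in>F. u x *\<^sub>C x) = (\<Sum>x\<in>F. u x *\<^sub>C f x)"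
  using assms(2,3)
proof (induction F rule: finite_induct)
  case empty
  then show ?case using linear_op_zero[OF assms(1)] by simp
next
  case (insert a F)
  then have "u a *\<^sub>C a \<in> D" "f (u a *\<^sub>C a) = u a *\<^sub>C f a"
    using linear_op_scaleC[OF assms(1)] by auto
  with insert assms(1) show ?case unfolding linear_op_def csubspace_def by auto
qed

lemma linear_op_inj_eq_zero:
  assumes "linear_op D f" "inj_on f D" "x \<in> D"
  shows "f x = 0 \<longleftrightarrow> x = 0"
  using assms linear_op_zero[OF assms(1)] by (metis inj_onD)

lemma cindependentD:
  assumes "cindependent S" "finite F" "F \<subseteq> S" "(\<Sum>x\<in>F. u x *\<^sub>C x) = 0" "x \<in> F"
  shows "u x = 0"
  using assms unfolding cindependent_def by metis

lemma cindependent_image: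
  assumes lin: "linear_op D f" and inj: "inj_on f D"
    and F: "finite F" "F \<subseteq> D" "cindependent F"
  shows "cindependent (f ` F)"
  unfolding cindependent_def
proof (intro allI impI)
  fix G u assume G: "finite G \<and> G \<subseteq> f ` F \<and> (\<Sum>x\<in>G. u x *\<^sub>C x) = 0"
  define F' where "F' = {x\<in>F. f x \<in> G}"
  have F': "finite F'" "F' \<subseteq> F" "F' \<subseteq> D" "inj_on f F'"
    using F inj unfolding F'_def by (auto intro: inj_on_subset)
  have G_eq: "G = f ` F'" using G unfolding F'_def by auto
  have "(\<Sum>x\<in>F'. u (f x) *\<^sub>C f x) = (\<Sum>x\<in>G. u x *\<^sub>C x)"
    unfolding G_eq by (simp add: sum.reindex[OF F'(4)])
  also have "\<dots> = 0" using G by blast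
  finally have "(\<Sum>x\<in>F'. u (f x) *\<^sub>C f x) = 0" .
  moreover note sum_F' = linear_op_sum[OF lin F'(1,3), of "\<lambda>x. u (f x)"]
  ultimately have "(\<Sum>x\<in>F'. u (f x) *\<^sub>C x) = 0"
    using linear_op_inj_eq_zero[OF lin inj conjunct1[OF sum_F']] by simp
  then have "u (f x) = 0" if "x \<in> F'" for x
    using cindependentD[OF F(3) F'(1,2), of "\<lambda>x. u (f x)"] that by simp
  then show "\<forall>x\<in>G. u x = 0" unfolding G_eq by auto
qed

lemma cdim_le_image:
  assumes "linear_op D f" "inj_on f D" "S \<subseteq> D" "f ` S \<subseteq> S'"
  shows "cdim S \<le> cdim S'"
  unfolding cdim_def
proof (rule SUP_least)
  fix F assume F: "F \<in> {F. finite F \<and> F \<subseteq> S \<and> cindependent F}"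
  then have "finite (f ` F)" "f ` F \<subseteq> S'" "cindependent (f ` F)"
    using assms(3,4) cindependent_image[OF assms(1,2), of F] by auto
  moreover have "card (f ` F) = card F"
    using F assms(2,3) by (intro card_image) (auto intro: inj_on_subset)
  ultimately show "enat (card F) \<le> (SUP F \<in> {F. finite F \<and> F \<subseteq> S' \<and> cindependent F}. enat (card F))"
    by (intro SUP_upper2[of "f ` F"]) auto
qed

lemma bounded_below_tendsto_zero:
  fixes f :: "'a::real_normed_vector \<Rightarrow> 'b::real_normed_vector"
  assumes "\<forall>x\<in>D. norm x \<le> C * norm (f x)" "\<And>n. y n \<in> D" "(\<lambda>n. f (y n)) \<longlonglongrightarrow> 0"
  shows "y \<longlonglongrightarrow> 0"
proof (rule Lim_null_comparison)
  show "\<forall>\<^sub>F n in sequentially. norm (y n) \<le> C * norm (f (y n))"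
    using assms(1,2) by simp
  show "(\<lambda>n. C * norm (f (y n))) \<longlonglongrightarrow> 0"
    using tendsto_mult_right_zero[OF tendsto_norm_zero[OF assms(3)]] .
qed

lemma closed_graph_op_limit:
  fixes f :: "'a::real_normed_vector \<Rightarrow> 'b::real_normed_vector"
  assumes "closed (graph_op D f)" "\<And>n. x n \<in> D" "x \<longlonglongrightarrow> a" "(\<lambda>n. f (x n)) \<longlonglongrightarrow> b"
  shows "a \<in> D \<and> f a = b"
proof -
  have "(x n, f (x n)) \<in> graph_op D f" for n
    using assms(2) unfolding graph_op_def by blast
  then have "(a, b) \<in> graph_op D f"
    by (rule closed_sequentially[OF assms(1) _ tendsto_Pair[OF assms(3,4)]])
  then show ?thesis unfolding graph_op_def by auto
qed

lemma is_core_approx: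
  fixes B :: "'a::complex_normed_vector \<Rightarrow> 'a"
  assumes "is_core D B C" "\<eta> \<in> D"
  obtains \<zeta> where "\<And>n. \<zeta> n \<in> C" "\<zeta> \<longlonglongrightarrow> \<eta>" "(\<lambda>n. B (\<zeta> n)) \<longlonglongrightarrow> B \<eta>"
proof -
  have "(\<eta>, B \<eta>) \<in> closure (graph_op C B)"
    using assms unfolding is_core_def graph_op_def by auto
  then obtain s where s: "\<And>n. s n \<in> graph_op C B" "s \<longlonglongrightarrow> (\<eta>, B \<eta>)"
    using closure_sequential by blast
  have s_graph: "fst (s n) \<in> C" "snd (s n) = B (fst (s n))" for n
    using s(1)[of n] unfolding graph_op_def by auto
  show ?thesis
  proof (rule that)
    show "fst (s n) \<in> C" for n using s_graph(1) .
    show "(\<lambda>n. fst (s n)) \<longlonglongrightarrow> \<eta>" using tendsto_fst[OF s(2)] by simp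
    show "(\<lambda>n. B (fst (s n))) \<longlonglongrightarrow> B \<eta>" using tendsto_snd[OF s(2)] by (simp add: s_graph(2))
  qed
qed

lemma intertwiningD:
  assumes "intertwining DA A DB B DT T"
  shows "linear_op DT T" "closed (graph_op DT T)" "DA \<subseteq> DT" "A ` DA \<subseteq> DT" "T ` DA \<subseteq> DB"
    "\<And>\<xi>. \<xi> \<in> DA \<Longrightarrow> B (T \<xi>) = T (A \<xi>)"
  using assms unfolding intertwining_def closed_op_def by auto

lemma intertwining_eigen_equation:
  assumes "intertwining DA A DB B DT T" "\<xi> \<in> DA"
  shows "A \<xi> - \<mu> *\<^sub>C \<xi> \<in> DT" "B (T \<xi>) - \<mu> *\<^sub>C T \<xi> = T (A \<xi> - \<mu> *\<^sub>C \<xi>)"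
proof -
  note T = intertwiningD[OF assms(1)]
  have "\<xi> \<in> DT" "A \<xi> \<in> DT" using T(3,4) assms(2) by auto
  then show "A \<xi> - \<mu> *\<^sub>C \<xi> \<in> DT" "B (T \<xi>) - \<mu> *\<^sub>C T \<xi> = T (A \<xi> - \<mu> *\<^sub>C \<xi>)"
    using linear_op_scaleC[OF T(1)] linear_op_diff[OF T(1)] T(6)[OF assms(2)] by auto
qed

lemma intertwining_eigenvector:
  assumes "intertwining DA A DB B DT T" "inj_on T DT" "is_eigenvector DA A \<mu> \<xi>"
  shows "is_eigenvector DB B \<mu> (T \<xi>)"
proof -
  note T = intertwiningD[OF assms(1)]
  have \<xi>: "\<xi> \<in> DA" "\<xi> \<in> DT" "\<xi> \<noteq> 0" "A \<xi> - \<mu> *\<^sub>C \<xi> = 0"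
    using assms(3) T(3) unfolding is_eigenvector_def by auto
  then have "B (T \<xi>) - \<mu> *\<^sub>C T \<xi> = 0"
    using intertwining_eigen_equation(2)[OF assms(1) \<xi>(1)] linear_op_zero[OF T(1)] by simp
  then show ?thesis
    using \<xi> T(5) linear_op_inj_eq_zero[OF T(1) assms(2)] unfolding is_eigenvector_def by auto
qed

lemma intertwining_image_eigenspace:
  assumes "intertwining DA A DB B DT T"
  shows "T ` eigenspace DA A \<mu> \<subseteq> eigenspace DB B \<mu>"
proof
  note T = intertwiningD[OF assms]
  fix \<eta> assume "\<eta> \<in> T ` eigenspace DA A \<mu>"
  then obtain \<xi> where \<xi>: "\<xi> \<in> DA" "A \<xi> - \<mu> *\<^sub>C \<xi> = 0" "\<eta> = T \<xi>"
    unfolding eigenspace_def by auto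
  then have "B (T \<xi>) - \<mu> *\<^sub>C T \<xi> = 0"
    using intertwining_eigen_equation(2)[OF assms \<xi>(1), of \<mu>] linear_op_zero[OF T(1)] by simp
  then show "\<eta> \<in> eigenspace DB B \<mu>"
    using \<xi> T(5) unfolding eigenspace_def by auto
qed

lemma intertwining_multiplicity_le:
  assumes "intertwining DA A DB B DT T" "inj_on T DT"
  shows "multiplicity_op DA A \<mu> \<le> multiplicity_op DB B \<mu>"
proof -
  note T = intertwiningD[OF assms(1)]
  have "eigenspace DA A \<mu> \<subseteq> DT" using T(3) unfolding eigenspace_def by auto
  then show ?thesis
    unfolding multiplicity_op_def
    using cdim_le_image[OF T(1) assms(2)] intertwining_image_eigenspace[OF assms(1)] by blast
qed

lemma point_spectrum_subset_of_image_eq: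
  assumes "intertwining DA A DB B DT T" "inj_on T DT" "T ` DA = DB"
  shows "point_spectrum DB B \<subseteq> point_spectrum DA A"
proof
  note T = intertwiningD[OF assms(1)]
  fix \<mu> assume "\<mu> \<in> point_spectrum DB B"
  then obtain \<eta> where \<eta>: "is_eigenvector DB B \<mu> \<eta>" unfolding point_spectrum_def by blast
  then obtain \<xi> where \<xi>: "\<xi> \<in> DA" "\<eta> = T \<xi>" using assms(3) unfolding is_eigenvector_def by blast
  have "T (A \<xi> - \<mu> *\<^sub>C \<xi>) = 0"
    using \<eta> \<xi> intertwining_eigen_equation(2)[OF assms(1) \<xi>(1), of \<mu>, symmetric]
    unfolding is_eigenvector_def by simp
  then have "A \<xi> = \<mu> *\<^sub>C \<xi>"
    using linear_op_inj_eq_zero[OF T(1) assms(2) intertwining_eigen_equation(1)[OF assms(1) \<xi>(1)]]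
    by simp
  moreover have "\<xi> \<noteq> 0" using \<eta> \<xi> linear_op_zero[OF T(1)] unfolding is_eigenvector_def by auto
  ultimately show "\<mu> \<in> point_spectrum DA A"
    using \<xi>(1) unfolding point_spectrum_def is_eigenvector_def by auto
qed

lemma point_spectrum_subset_spectrum_of_core:
  fixes DA :: "'a::complex_normed_vector set" and DB :: "'b::complex_normed_vector set"
  assumes "intertwining DA A DB B DT T" "bounded_inverse DT T" "is_core DB B (T ` DA)"
  shows "point_spectrum DB B \<subseteq> spectrum_op DA A"
proof
  note T = intertwiningD[OF assms(1)]
  fix \<mu> assume "\<mu> \<in> point_spectrum DB B"
  then obtain \<eta> where \<eta>: "\<eta> \<in> DB" "\<eta> \<noteq> 0" "B \<eta> = \<mu> *\<^sub>C \<eta>"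
    unfolding point_spectrum_def is_eigenvector_def by auto
  obtain \<zeta> where \<zeta>: "\<And>n. \<zeta> n \<in> T ` DA" "\<zeta> \<longlonglongrightarrow> \<eta>" "(\<lambda>n. B (\<zeta> n)) \<longlonglongrightarrow> B \<eta>"
    using is_core_approx[OF assms(3) \<eta>(1)] by blast
  have "\<forall>n. \<exists>x. x \<in> DA \<and> \<zeta> n = T x" using \<zeta>(1) by blast
  then obtain \<xi> where \<xi>: "\<And>n. \<xi> n \<in> DA" "\<And>n. \<zeta> n = T (\<xi> n)"
    by metis
  define y where "y n = A (\<xi> n) - \<mu> *\<^sub>C \<xi> n" for n
  have y: "y n \<in> DT" "T (y n) = B (\<zeta> n) - \<mu> *\<^sub>C \<zeta> n" for n
    using intertwining_eigen_equation[OF assms(1) \<xi>(1)] \<xi>(2) unfolding y_def by auto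
  have "(\<lambda>n. T (y n)) \<longlonglongrightarrow> \<mu> *\<^sub>C \<eta> - \<mu> *\<^sub>C \<eta>"
    unfolding y(2) using \<zeta>(3)[unfolded \<eta>(3)] bounded_linear.tendsto[OF bounded_linear_scaleC \<zeta>(2)]
    by (rule tendsto_diff)
  moreover obtain C where "\<forall>x\<in>DT. norm x \<le> C * norm (T x)"
    using assms(2) unfolding bounded_inverse_def by blast
  ultimately have y_0: "y \<longlonglongrightarrow> 0"
    using bounded_below_tendsto_zero[of DT C T y] y(1) by simp
  show "\<mu> \<in> spectrum_op DA A"
    unfolding spectrum_op_def
  proof
    assume "\<mu> \<in> resolvent_set DA A"
    then obtain R where R: "bounded_clinear_map R" "\<And>x. x \<in> DA \<Longrightarrow> R (A x - \<mu> *\<^sub>C x) = x"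
      unfolding resolvent_set_def by auto
    have "\<xi> \<longlonglongrightarrow> 0"
      using bounded_linear.tendsto_zero[OF bounded_clinear_map_imp_bounded_linear[OF R(1)] y_0]
      by (simp add: y_def R(2)[OF \<xi>(1)])
    moreover have "(\<lambda>n. T (\<xi> n)) \<longlonglongrightarrow> \<eta>" using \<zeta>(2) by (simp add: \<xi>(2)[symmetric])
    ultimately have "T 0 = \<eta>"
      using closed_graph_op_limit[OF T(2), of \<xi> 0 \<eta>] \<xi>(1) T(3) by blast
    then show False using \<eta>(2) linear_op_zero[OF T(1)] by simp
  qed
qed

theorem proposition3p18:
  fixes DA :: "'a::chilbert_space set" and A :: "'a \<Rightarrow> 'a"
    and DB :: "'b::chilbert_space set" and B :: "'b \<Rightarrow> 'b"
    and DT :: "'a set" and T :: "'a \<Rightarrow> 'b"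
  assumes A: "closed_op DA A" "densely_defined DA"
    and B: "closed_op DB B" "densely_defined DB"
    and T: "quasi_affine_via DA A DB B DT T"
  shows "(point_spectrum DA A \<subseteq> point_spectrum DB B
          \<and> (\<forall>\<xi> \<mu>. is_eigenvector DA A \<mu> \<xi> \<longrightarrow> is_eigenvector DB B \<mu> (T \<xi>))
          \<and> (\<forall>\<mu>\<in>point_spectrum DA A. multiplicity_op DA A \<mu> \<le> multiplicity_op DB B \<mu>))
     \<and> (T ` DA = DB \<and> bounded_inverse DT T \<longrightarrow> point_spectrum DA A = point_spectrum DB B)
     \<and> (bounded_inverse DT T \<and> is_core DB B (T ` DA) \<longrightarrow> point_spectrum DB B \<subseteq> spectrum_op DA A)"
proof -
  have intw: "intertwining DA A DB B DT T" and inj: "inj_on T DT"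
    using T unfolding quasi_affine_via_def by auto
  have eigvec: "\<forall>\<xi> \<mu>. is_eigenvector DA A \<mu> \<xi> \<longrightarrow> is_eigenvector DB B \<mu> (T \<xi>)"
    using intertwining_eigenvector[OF intw inj] by blast
  then have "point_spectrum DA A \<subseteq> point_spectrum DB B"
    unfolding point_spectrum_def by blast
  then show ?thesis
    using eigvec intertwining_multiplicity_le[OF intw inj]
      point_spectrum_subset_of_image_eq[OF intw inj]
      point_spectrum_subset_spectrum_of_core[OF intw]
    by blast
qed

end
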